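(* Consider the setting described in the context, and fix a round index $k\ge 0$ and two distinct UAVs $i\neq j$. Assume that $$\Big\|\Theta^{-1}\big[\hat p_j(hT_c+2T\,|\,(k-1)T)-\hat p_i(hT_c+2T\,|\,(k-1)T)\big]\Big\|_2\ \ge\ \hat r_{\min}\qquad\text{for all } h\in\{0,\dots,h_c\}.$$ Assume moreover that the round-$k$ planned positions of both UAVs satisfy the collision-avoidance constraint (C) of round $k$: UAV $i$'s plan satisfies (C) with respect to $j$, and UAV $j$'s plan satisfies (C) with respect to $i$. This is assumed to hold regardless of whether either trajectory was recomputed at round $k$ or obtained by the reuse rule. Then $$\Big\|\Theta^{-1}\big[\hat p_j(hT_c+T\,|\,kT)-\hat p_i(hT_c+T\,|\,kT)\big]\Big\|_2\ \ge\ \hat r_{\min}\qquad\text{for all } h\in\{0,\dots,h_c\}.$$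
   Context: We consider $N$ UAVs indexed by $i\in\{1,\dots,N\}$, all with linear dynamics $\dot x_i=A_ix_i+B_iu_i$. The state is partitioned as $x_i=(p_i,v_i,y_i)$, where $p_i\in\mathbb R^3$ is the position, $v_i$ is the velocity and $y_i$ collects the remaining state components. $\Theta$ is a fixed invertible $3\times 3$ matrix, and $\hat r_{\min}>0$ is a design constant. Planning takes place in rounds at times $kT$ with $T>0$. At round $k$, each UAV $i$ has a planned state trajectory $\hat x_i(\tau\,|\,kT)$, $\tau\ge T$, with planned position part $\hat p_i(\tau\,|\,kT)$; it describes the absolute time $kT+\tau$. The trajectory planned at round $k$ starts at $\tau=T$. Let $T_c>0$ and $h_c\in\mathbb N$ be such that $T/T_c=h_c/H\in\mathbb N$ for a horizon $H\in\mathbb N$. For $h\in\{0,\dots,h_c\}$ write $$n_{ij}^{h}:=\Theta^{-1}\big[\hat p_j(hT_c+2T\,|\,(k-1)T)-\hat p_i(hT_c+2T\,|\,(k-1)T)\big].$$ The collision-avoidance constraint (C) of round $k$ for UAV $i$ with respect to UAV $j$ requires, for all $h\in\{0,\dots,h_c\}$, $$\frac{(n_{ij}^h)^\top}{\|n_{ij}^h\|_2}\,\Theta^{-1}\big[\hat p_j(hT_c+2T\,|\,(k-1)T)-\hat p_i(hT_c+T\,|\,kT)\big]\ \ge\ \tfrac12\big(\hat r_{\min}+\|n_{ij}^h\|_2\big).$$ The reuse rule (applied when UAV $i$'s trajectory is not recomputed at round $k$) sets $\hat x_i(t\,|\,kT)=\hat x_i(t+T\,|\,(k-1)T)$ and $u_i(t\,|\,kT)=u_i(t+T\,|\,(k-1)T)$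 for all $t\ge T$. *)

theory Defs
  imports "HOL-Analysis.Analysis"
begin

text \<open>Planned positions: phat i r tau = planned position of UAV i at round r
  (describing absolute time r*T + tau). Rounds are integers so that round k-1 = -1 makes sense.\<close>

definition nvec :: "real^3^3 \<Rightarrow> (nat \<Rightarrow> int \<Rightarrow> real \<Rightarrow> real^3) \<Rightarrow> real \<Rightarrow> real \<Rightarrow> int \<Rightarrow> nat \<Rightarrow> nat \<Rightarrow> nat \<Rightarrow> real^3" where
  "nvec \<Theta> phat T Tc k i j h =
     matrix_inv \<Theta> *v (phat j (k - 1) (real h * Tc + 2 * T) - phat i (k - 1) (real h * Tc + 2 * T))"

definition ca_constraint ::
  "real^3^3 \<Rightarrow> real \<Rightarrow> (nat \<Rightarrow> int \<Rightarrow> real \<Rightarrow> real^3) \<Rightarrow> real \<Rightarrow> real \<Rightarrow> nat \<Rightarrow> int \<Rightarrow> nat \<Rightarrow> nat \<Rightarrow> bool" where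
  "ca_constraint \<Theta> rmin phat T Tc hc k i j \<longleftrightarrow>
     (\<forall>h \<in> {0..hc}.
        (nvec \<Theta> phat T Tc k i j h /\<^sub>R norm (nvec \<Theta> phat T Tc k i j h)) \<bullet>
          (matrix_inv \<Theta> *v (phat j (k - 1) (real h * Tc + 2 * T) - phat i k (real h * Tc + T)))
        \<ge> (rmin + norm (nvec \<Theta> phat T Tc k i j h)) / 2)"

end

theory Submission
  imports Defs
begin

text \<open>Write \<open>a, b\<close> for the previous plans of \<open>i, j\<close> and \<open>x, y\<close> for their new plans (all in
  \<open>\<Theta>\<close>-coordinates), and \<open>u\<close> for the unit vector from \<open>a\<close> to \<open>b\<close>. Constraint (C) for \<open>i\<close> says
  \<open>u \<bullet> (b - x) \<ge> (r + |b - a|) / 2\<close>, and for \<open>j\<close> it says \<open>u \<bullet> (y - a) \<ge> (r + |b - a|) / 2\<close>.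
  Adding them and using \<open>u \<bullet> (b - a) = |b - a|\<close> gives \<open>u \<bullet> (y - x) \<ge> r\<close>, hence \<open>|y - x| \<ge> r\<close> by
  Cauchy-Schwarz.\<close>

lemma norm_diff_ge_of_halfspace_constraints:
  fixes a b x y :: "'a::real_inner"
  assumes "((b - a) /\<^sub>R norm (b - a)) \<bullet> (b - x) \<ge> (r + norm (b - a)) / 2"
    and "((a - b) /\<^sub>R norm (a - b)) \<bullet> (a - y) \<ge> (r + norm (a - b)) / 2"
  shows "r \<le> norm (y - x)"
proof -
  define u where "u = (b - a) /\<^sub>R norm (b - a)"
  have "(a - b) /\<^sub>R norm (a - b) = - u"
    unfolding u_def by (subst norm_minus_commute) (simp add: scaleR_diff_right)
  then have constraint_j: "u \<bullet> (y - a) \<ge> (r + norm (b - a)) / 2"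
    using assms(2) by (simp add: norm_minus_commute inner_diff_right)
  have constraint_i: "u \<bullet> (b - x) \<ge> (r + norm (b - a)) / 2"
    using assms(1) unfolding u_def .
  have "u \<bullet> (b - x) + u \<bullet> (y - a) = u \<bullet> (b - a) + u \<bullet> (y - x)"
    by (simp add: inner_diff_right)
  moreover have "u \<bullet> (b - a) = norm (b - a)"
    unfolding u_def by (cases "b = a") (simp_all add: dot_square_norm power2_eq_square)
  moreover have "u \<bullet> (y - x) \<le> norm (y - x)"
  proof -
    have "norm u \<le> 1"
      unfolding u_def by (cases "b = a") simp_all
    then have "norm u * norm (y - x) \<le> norm (y - x)"
      by (simp add: mult_left_le_one_le)
    then show ?thesis
      using norm_cauchy_schwarz[of u "y - x"] by linarith
  qed
  ultimately show ?thesis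
    using constraint_i constraint_j by argo
qed

lemma ca_constraint_in_coordinates:
  assumes "ca_constraint \<Theta> rmin phat T Tc hc k i j" and "h \<in> {0..hc}"
  defines "a \<equiv> matrix_inv \<Theta> *v phat i (k - 1) (real h * Tc + 2 * T)"
    and "b \<equiv> matrix_inv \<Theta> *v phat j (k - 1) (real h * Tc + 2 * T)"
    and "x \<equiv> matrix_inv \<Theta> *v phat i k (real h * Tc + T)"
  shows "((b - a) /\<^sub>R norm (b - a)) \<bullet> (b - x) \<ge> (rmin + norm (b - a)) / 2"
  using assms(1,2) unfolding ca_constraint_def nvec_def a_def b_def x_def
  by (simp add: matrix_vector_mult_diff_distrib)

theorem lemma1:
  fixes \<Theta> :: "real^3^3" and rmin T Tc :: real and hc H N i j :: nat and k :: int
    and phat :: "nat \<Rightarrow> int \<Rightarrow> real \<Rightarrow> real^3"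
  assumes "invertible \<Theta>" and "rmin > 0" and "T > 0" and "Tc > 0" and "H > 0"
    and "T / Tc = real hc / real H" and "T / Tc \<in> \<nat>"
    and "k \<ge> 0" and "i \<in> {1..N}" and "j \<in> {1..N}" and "i \<noteq> j"
    and "\<forall>h \<in> {0..hc}. norm (nvec \<Theta> phat T Tc k i j h) \<ge> rmin"
    and "ca_constraint \<Theta> rmin phat T Tc hc k i j"
    and "ca_constraint \<Theta> rmin phat T Tc hc k j i"
  shows "\<forall>h \<in> {0..hc}.
     norm (matrix_inv \<Theta> *v (phat j k (real h * Tc + T) - phat i k (real h * Tc + T))) \<ge> rmin"
proof
  fix h assume "h \<in> {0..hc}"
  from norm_diff_ge_of_halfspace_constraints[OF ca_constraint_in_coordinates[OF assms(13) this]
      ca_constraint_in_coordinates[OF assms(14) this]]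
  show "norm (matrix_inv \<Theta> *v (phat j k (real h * Tc + T) - phat i k (real h * Tc + T))) \<ge> rmin"
    by (simp add: matrix_vector_mult_diff_distrib)
qed

end
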